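(* Let $\mathcal{H}$ be a quasitriangular Hopf algebra with universal R-matrix $\mathcal{R}=\mathcal{R}_1\otimes\mathcal{R}_2$, and let $\mathcal{L}$ be a left $\mathcal{H}$-module algebra which is quasi-commutative, i.e. $(\mathcal{R}_2\triangleright\ell_2)(\mathcal{R}_1\triangleright\ell_1)=\ell_1\ell_2$ for all $\ell_1,\ell_2\in\mathcal{L}$. Then $\mathcal{L}$ is an $\mathcal{H}$-base algebra with the left $\mathcal{H}$-coaction $\delta(\ell):=\mathcal{R}_2\otimes\mathcal{R}_1\triangleright\ell$.
   Context: $\mathcal{H}$ is a Hopf algebra over a commutative ring $k$ (over a field of characteristic zero), with Sweedler notation $\Delta(x)=x^{(1)}\otimes x^{(2)}$; the universal R-matrix satisfies $\mathcal{R}\Delta(h)=\Delta^{op}(h)\mathcal{R}$, $(\Delta\otimes\mathrm{id})(\mathcal{R})=\mathcal{R}_{13}\mathcal{R}_{23}$, $(\mathrm{id}\otimes\Delta)(\mathcal{R})=\mathcal{R}_{13}\mathcal{R}_{12}$ (summation over the components of $\mathcal{R}$ implicit). An $\mathcal{H}$-base algebra is a left $\mathcal{H}$-module algebra and left $\mathcal{H}$-comodule algebra $\mathcal{L}$ (action $\triangleright$, coaction $\delta(\ell)=\ell^{(1)}\otimes\ell^{[2]}$ an algebra homomorphism) satisfying $\{x^{(1)}\triangleright\ell\}^{(1)}x^{(2)}\otimes\{x^{(1)}\triangleright\ell\}^{[2]}=x^{(1)}\ell^{(1)}\otimes x^{(2)}\triangleright\ell^{[2]}$ for all $x\in\mathcal{H}$,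 $\ell\in\mathcal{L}$, and $\ell_1\ell_2=(\ell_1^{(1)}\triangleright\ell_2)\ell_1^{[2]}$ for all $\ell_1,\ell_2\in\mathcal{L}$. *)

theory Defs
  imports Main
begin

definition kalg :: "('k::comm_ring_1 \<Rightarrow> 'a::ring_1 \<Rightarrow> 'a) \<Rightarrow> bool" where
  "kalg s \<longleftrightarrow>
     (\<forall>c x y. s c (x + y) = s c x + s c y) \<and>
     (\<forall>c d x. s (c + d) x = s c x + s d x) \<and>
     (\<forall>c d x. s (c * d) x = s c (s d x)) \<and>
     (\<forall>x. s 1 x = x) \<and>
     (\<forall>c x y. s c (x * y) = s c x * y) \<and>
     (\<forall>c x y. s c (x * y) = x * s c y)"

text \<open>An element of a tensor product is represented by a finite list of simple
  tensors (Sweedler-style sum).  Its image in the free k-module on the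
  tuples is fsum; two representatives denote the same tensor iff their
  difference lies in the k-span of the multilinearity relations.\<close>

definition fsum :: "'x list \<Rightarrow> 'x \<Rightarrow> 'k::comm_ring_1" where
  "fsum xs = (\<lambda>z. sum_list (map (\<lambda>p. if p = z then 1 else 0) xs))"

definition gen :: "'x \<Rightarrow> 'x \<Rightarrow> 'k::comm_ring_1" where
  "gen z0 = (\<lambda>z. if z = z0 then 1 else 0)"

inductive_set tnull2 :: "('k::comm_ring_1 \<Rightarrow> 'a::ab_group_add \<Rightarrow> 'a) \<Rightarrow>
    ('k \<Rightarrow> 'b::ab_group_add \<Rightarrow> 'b) \<Rightarrow> ('a \<times> 'b \<Rightarrow> 'k) set"
  for sA sB where
  zero2: "(\<lambda>z. 0) \<in> tnull2 sA sB"
| add2: "p \<in> tnull2 sA sB \<Longrightarrow> q \<in> tnull2 sA sB \<Longrightarrow> (\<lambda>z. p z + q z) \<in> tnull2 sA sB"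
| smul2: "p \<in> tnull2 sA sB \<Longrightarrow> (\<lambda>z. c * p z) \<in> tnull2 sA sB"
| addA2: "(\<lambda>z. gen (a + a', b) z - gen (a, b) z - gen (a', b) z) \<in> tnull2 sA sB"
| addB2: "(\<lambda>z. gen (a, b + b') z - gen (a, b) z - gen (a, b') z) \<in> tnull2 sA sB"
| sclA2: "(\<lambda>z. gen (sA c a, b) z - c * gen (a, b) z) \<in> tnull2 sA sB"
| sclB2: "(\<lambda>z. gen (a, sB c b) z - c * gen (a, b) z) \<in> tnull2 sA sB"

inductive_set tnull3 :: "('k::comm_ring_1 \<Rightarrow> 'a::ab_group_add \<Rightarrow> 'a) \<Rightarrow>
    ('k \<Rightarrow> 'b::ab_group_add \<Rightarrow> 'b) \<Rightarrow> ('k \<Rightarrow> 'c::ab_group_add \<Rightarrow> 'c) \<Rightarrow>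
    ('a \<times> 'b \<times> 'c \<Rightarrow> 'k) set"
  for sA sB sC where
  zero3: "(\<lambda>z. 0) \<in> tnull3 sA sB sC"
| add3: "p \<in> tnull3 sA sB sC \<Longrightarrow> q \<in> tnull3 sA sB sC \<Longrightarrow> (\<lambda>z. p z + q z) \<in> tnull3 sA sB sC"
| smul3: "p \<in> tnull3 sA sB sC \<Longrightarrow> (\<lambda>z. c * p z) \<in> tnull3 sA sB sC"
| addA3: "(\<lambda>z. gen (a + a', b, d) z - gen (a, b, d) z - gen (a', b, d) z) \<in> tnull3 sA sB sC"
| addB3: "(\<lambda>z. gen (a, b + b', d) z - gen (a, b, d) z - gen (a, b', d) z) \<in> tnull3 sA sB sC"
| addC3: "(\<lambda>z. gen (a, b, d + d') z - gen (a, b, d) z - gen (a, b, d') z) \<in> tnull3 sA sB sC"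
| sclA3: "(\<lambda>z. gen (sA c a, b, d) z - c * gen (a, b, d) z) \<in> tnull3 sA sB sC"
| sclB3: "(\<lambda>z. gen (a, sB c b, d) z - c * gen (a, b, d) z) \<in> tnull3 sA sB sC"
| sclC3: "(\<lambda>z. gen (a, b, sC c d) z - c * gen (a, b, d) z) \<in> tnull3 sA sB sC"

definition tens2_eq :: "('k::comm_ring_1 \<Rightarrow> 'a::ab_group_add \<Rightarrow> 'a) \<Rightarrow>
    ('k \<Rightarrow> 'b::ab_group_add \<Rightarrow> 'b) \<Rightarrow> ('a \<times> 'b) list \<Rightarrow> ('a \<times> 'b) list \<Rightarrow> bool" where
  "tens2_eq sA sB xs ys \<longleftrightarrow> (\<lambda>z. fsum xs z - fsum ys z) \<in> tnull2 sA sB"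

definition tens3_eq :: "('k::comm_ring_1 \<Rightarrow> 'a::ab_group_add \<Rightarrow> 'a) \<Rightarrow>
    ('k \<Rightarrow> 'b::ab_group_add \<Rightarrow> 'b) \<Rightarrow> ('k \<Rightarrow> 'c::ab_group_add \<Rightarrow> 'c) \<Rightarrow>
    ('a \<times> 'b \<times> 'c) list \<Rightarrow> ('a \<times> 'b \<times> 'c) list \<Rightarrow> bool" where
  "tens3_eq sA sB sC xs ys \<longleftrightarrow> (\<lambda>z. fsum xs z - fsum ys z) \<in> tnull3 sA sB sC"

definition hopf_algebra ::
  "('k::comm_ring_1 \<Rightarrow> 'h::ring_1 \<Rightarrow> 'h) \<Rightarrow> ('h \<Rightarrow> ('h \<times> 'h) list) \<Rightarrow> ('h \<Rightarrow> 'k) \<Rightarrow> ('h \<Rightarrow> 'h) \<Rightarrow> bool" where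
  "hopf_algebra sH D eps S \<longleftrightarrow>
     kalg sH \<and>
     (\<forall>x y. tens2_eq sH sH (D (x + y)) (D x @ D y)) \<and>
     (\<forall>c x. tens2_eq sH sH (D (sH c x)) [(sH c a, b). (a, b) \<leftarrow> D x]) \<and>
     (\<forall>x y. tens2_eq sH sH (D (x * y)) [(a * a', b * b'). (a, b) \<leftarrow> D x, (a', b') \<leftarrow> D y]) \<and>
     tens2_eq sH sH (D 1) [(1, 1)] \<and>
     (\<forall>x. tens3_eq sH sH sH [(a1, a2, b). (a, b) \<leftarrow> D x, (a1, a2) \<leftarrow> D a]
                            [(a, b1, b2). (a, b) \<leftarrow> D x, (b1, b2) \<leftarrow> D b]) \<and>
     (\<forall>x y. eps (x + y) = eps x + eps y) \<and>
     (\<forall>c x. eps (sH c x) = c * eps x) \<and>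
     (\<forall>x y. eps (x * y) = eps x * eps y) \<and>
     eps 1 = 1 \<and>
     (\<forall>x. sum_list (map (\<lambda>(a, b). sH (eps a) b) (D x)) = x) \<and>
     (\<forall>x. sum_list (map (\<lambda>(a, b). sH (eps b) a) (D x)) = x) \<and>
     (\<forall>x y. S (x + y) = S x + S y) \<and>
     (\<forall>c x. S (sH c x) = sH c (S x)) \<and>
     (\<forall>x. sum_list (map (\<lambda>(a, b). S a * b) (D x)) = sH (eps x) 1) \<and>
     (\<forall>x. sum_list (map (\<lambda>(a, b). a * S b) (D x)) = sH (eps x) 1)"

text \<open>Universal R-matrix, R = sum of R1 \<otimes> R2 given by the list R.\<close>
definition quasitriangular ::
  "('k::comm_ring_1 \<Rightarrow> 'h::ring_1 \<Rightarrow> 'h) \<Rightarrow> ('h \<Rightarrow> ('h \<times> 'h) list) \<Rightarrow> ('h \<times> 'h) list \<Rightarrow> bool" where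
  "quasitriangular sH D R \<longleftrightarrow>
     (\<forall>x. tens2_eq sH sH [(r1 * a, r2 * b). (r1, r2) \<leftarrow> R, (a, b) \<leftarrow> D x]
                          [(b * r1, a * r2). (a, b) \<leftarrow> D x, (r1, r2) \<leftarrow> R]) \<and>
     tens3_eq sH sH sH [(a1, a2, r2). (r1, r2) \<leftarrow> R, (a1, a2) \<leftarrow> D r1]
                       [(r1, r1', r2 * r2'). (r1, r2) \<leftarrow> R, (r1', r2') \<leftarrow> R] \<and>
     tens3_eq sH sH sH [(r1, b1, b2). (r1, r2) \<leftarrow> R, (b1, b2) \<leftarrow> D r2]
                       [(r1 * r1', r2', r2). (r1, r2) \<leftarrow> R, (r1', r2') \<leftarrow> R]"

definition module_algebra ::
  "('k::comm_ring_1 \<Rightarrow> 'h::ring_1 \<Rightarrow> 'h) \<Rightarrow> ('k \<Rightarrow> 'l::ring_1 \<Rightarrow> 'l) \<Rightarrow>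
   ('h \<Rightarrow> ('h \<times> 'h) list) \<Rightarrow> ('h \<Rightarrow> 'k) \<Rightarrow> ('h \<Rightarrow> 'l \<Rightarrow> 'l) \<Rightarrow> bool" where
  "module_algebra sH sL D eps act \<longleftrightarrow>
     kalg sL \<and>
     (\<forall>x y l. act (x + y) l = act x l + act y l) \<and>
     (\<forall>c x l. act (sH c x) l = sL c (act x l)) \<and>
     (\<forall>x l l'. act x (l + l') = act x l + act x l') \<and>
     (\<forall>c x l. act x (sL c l) = sL c (act x l)) \<and>
     (\<forall>x y l. act (x * y) l = act x (act y l)) \<and>
     (\<forall>l. act 1 l = l) \<and>
     (\<forall>x l l'. act x (l * l') = sum_list (map (\<lambda>(a, b). act a l * act b l') (D x))) \<and>
     (\<forall>x. act x 1 = sL (eps x) 1)"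

text \<open>dl l is a representative of the coaction value, a list of pairs
  (l^(1), l^[2]) in H \<times> L.\<close>
definition comodule_algebra ::
  "('k::comm_ring_1 \<Rightarrow> 'h::ring_1 \<Rightarrow> 'h) \<Rightarrow> ('k \<Rightarrow> 'l::ring_1 \<Rightarrow> 'l) \<Rightarrow>
   ('h \<Rightarrow> ('h \<times> 'h) list) \<Rightarrow> ('h \<Rightarrow> 'k) \<Rightarrow> ('l \<Rightarrow> ('h \<times> 'l) list) \<Rightarrow> bool" where
  "comodule_algebra sH sL D eps dl \<longleftrightarrow>
     kalg sL \<and>
     (\<forall>l l'. tens2_eq sH sL (dl (l + l')) (dl l @ dl l')) \<and>
     (\<forall>c l. tens2_eq sH sL (dl (sL c l)) [(a, sL c m). (a, m) \<leftarrow> dl l]) \<and>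
     (\<forall>l. tens3_eq sH sH sL [(a1, a2, m). (a, m) \<leftarrow> dl l, (a1, a2) \<leftarrow> D a]
                            [(a, b, m'). (a, m) \<leftarrow> dl l, (b, m') \<leftarrow> dl m]) \<and>
     (\<forall>l. sum_list (map (\<lambda>(a, m). sL (eps a) m) (dl l)) = l) \<and>
     (\<forall>l l'. tens2_eq sH sL (dl (l * l')) [(a * a', m * m'). (a, m) \<leftarrow> dl l, (a', m') \<leftarrow> dl l']) \<and>
     tens2_eq sH sL (dl 1) [(1, 1)]"

definition base_algebra ::
  "('k::comm_ring_1 \<Rightarrow> 'h::ring_1 \<Rightarrow> 'h) \<Rightarrow> ('k \<Rightarrow> 'l::ring_1 \<Rightarrow> 'l) \<Rightarrow>
   ('h \<Rightarrow> ('h \<times> 'h) list) \<Rightarrow> ('h \<Rightarrow> 'k) \<Rightarrow> ('h \<Rightarrow> 'l \<Rightarrow> 'l) \<Rightarrow> ('l \<Rightarrow> ('h \<times> 'l) list) \<Rightarrow> bool" where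
  "base_algebra sH sL D eps act dl \<longleftrightarrow>
     module_algebra sH sL D eps act \<and>
     comodule_algebra sH sL D eps dl \<and>
     (\<forall>x l. tens2_eq sH sL [(c * a2, m). (a1, a2) \<leftarrow> D x, (c, m) \<leftarrow> dl (act a1 l)]
                           [(a1 * c, act a2 m). (a1, a2) \<leftarrow> D x, (c, m) \<leftarrow> dl l]) \<and>
     (\<forall>l1 l2. l1 * l2 = sum_list (map (\<lambda>(c, m). act c l2 * m) (dl l1)))"

end

theory Submission
  imports Defs "HOL.Modules" "HOL-Library.Function_Algebras" "HOL-Library.Multiset"
begin

(*
  Every axiom of the coaction delta(l) = R2 (x) R1 |> l is the image of an identity for R
  under a multilinear map: coassociativity comes from (id (x) Delta)(R) = R13 R12,
  multiplicativity from (Delta (x) id)(R) = R13 R23 and the module-algebra rule, and the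
  compatibility with the action from R Delta = Delta^op R.  The counit law and the product
  rule l1 l2 = (l1^(1) |> l2) l1^[2] are instances of quasi-commutativity.

  The unit law needs (eps (x) id)(R) to act like 1, and R is not assumed invertible.
  Instead, v = (eps (x) id)(R) is idempotent, satisfies eps(v) v = v and S(v) v = eps(v) 1,
  hence v = eps(v) 1 v = S(v) v v = eps(v) 1; quasi-commutativity with one factor 1 gives
  v |> l = l, so the scalar eps(v) acts as 1 on L.

  An identity
  is transported along a map of simple tensors by extending the map linearly to the free
  module and checking that it sends relators to relators.
*)

lemma kalg_module: "kalg s \<Longrightarrow> module s"
  unfolding kalg_def by unfold_locales auto

lemma kalg_mult_scale_left: "kalg s \<Longrightarrow> s c (x * y) = s c x * y"
  and kalg_mult_scale_right: "kalg s \<Longrightarrow> s c (x * y) = x * s c y"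
  unfolding kalg_def by blast+

lemma (in additive) sum_list_map: "f (\<Sum>x\<leftarrow>xs. g x) = (\<Sum>x\<leftarrow>xs. f (g x))"
  by (induction xs) (simp_all add: add zero)

lemma sum_list_map_concat:
  "sum_list (map f (concat (map g xs))) = (\<Sum>x\<leftarrow>xs. sum_list (map f (g x)))"
  by (induction xs) auto

lemma sum_list_mult_sum_list:
  "(\<Sum>x\<leftarrow>xs. f x) * (\<Sum>y\<leftarrow>ys. g y) = (\<Sum>x\<leftarrow>xs. \<Sum>y\<leftarrow>ys. f x * g y :: 'a::semiring_0)"
  by (induction xs) (simp_all add: distrib_right sum_list_const_mult)

lemma sum_list_swap:
  "(\<Sum>x\<leftarrow>xs. \<Sum>y\<leftarrow>ys. f x y) = (\<Sum>y\<leftarrow>ys. \<Sum>x\<leftarrow>xs. f x y :: 'a::comm_monoid_add)"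
  by (induction xs) (simp_all add: sum_list_addf)

context module
begin

lemma scale_sum_list_left: "(\<Sum>x\<leftarrow>xs. f x) *s y = (\<Sum>x\<leftarrow>xs. f x *s y)"
  by (induction xs) (simp_all add: scale_left_distrib)

lemma scale_sum_list_right: "a *s (\<Sum>x\<leftarrow>xs. f x) = (\<Sum>x\<leftarrow>xs. a *s f x)"
  by (induction xs) (simp_all add: scale_right_distrib)

end

section \<open>Linear extension from the free module\<close>

abbreviation relator_add :: "'x \<Rightarrow> 'x \<Rightarrow> 'x \<Rightarrow> 'x \<Rightarrow> 'k::comm_ring_1" where
  "relator_add x y w \<equiv> (\<lambda>z. gen x z - gen y z - gen w z)"

abbreviation relator_scale :: "'x \<Rightarrow> 'k \<Rightarrow> 'x \<Rightarrow> 'x \<Rightarrow> 'k::comm_ring_1" where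
  "relator_scale x c y \<equiv> (\<lambda>z. gen x z - c * gen y z)"

lemma finite_support_gen: "finite {z. (gen x z :: 'k::comm_ring_1) \<noteq> 0}"
  by (rule finite_subset[of _ "{x}"]) (auto simp: gen_def)

lemma finite_support_add:
  "finite {z. p z \<noteq> 0} \<Longrightarrow> finite {z. q z \<noteq> 0} \<Longrightarrow>
    finite {z. p z + q z \<noteq> (0::'a::monoid_add)}"
  by (rule finite_subset[of _ "{z. p z \<noteq> 0} \<union> {z. q z \<noteq> 0}"]) auto

lemma finite_support_diff:
  "finite {z. p z \<noteq> 0} \<Longrightarrow> finite {z. q z \<noteq> 0} \<Longrightarrow>
    finite {z. p z - q z \<noteq> (0::'a::group_add)}"
  by (rule finite_subset[of _ "{z. p z \<noteq> 0} \<union> {z. q z \<noteq> 0}"]) auto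

lemma finite_support_mult:
  "finite {z. p z \<noteq> 0} \<Longrightarrow> finite {z. c * p z \<noteq> (0::'a::mult_zero)}"
  by (rule finite_subset[of _ "{z. p z \<noteq> 0}"]) auto

lemma finite_support_fsum: "finite {z. (fsum xs z :: 'k::comm_ring_1) \<noteq> 0}"
  by (rule finite_subset[of _ "set xs"]) (induction xs, auto simp: fsum_def)

lemmas finite_support_intros =
  finite_support_gen finite_support_add finite_support_diff finite_support_mult

lemma finite_support_tnull2: "p \<in> tnull2 sA sB \<Longrightarrow> finite {z. p z \<noteq> 0}"
  by (induction rule: tnull2.induct) (rule finite_support_intros | assumption | simp)+

lemma finite_support_tnull3: "p \<in> tnull3 sA sB sC \<Longrightarrow> finite {z. p z \<noteq> 0}"
  by (induction rule: tnull3.induct) (rule finite_support_intros | assumption | simp)+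

context module
begin

definition lin_ext :: "('x \<Rightarrow> 'b) \<Rightarrow> ('x \<Rightarrow> 'a) \<Rightarrow> 'b" where
  "lin_ext f p = (\<Sum>z | p z \<noteq> 0. p z *s f z)"

lemma lin_ext_eq_sum:
  assumes "finite F" "{z. p z \<noteq> 0} \<subseteq> F"
  shows "lin_ext f p = (\<Sum>z\<in>F. p z *s f z)"
  unfolding lin_ext_def by (rule sum.mono_neutral_left) (use assms in auto)

lemma lin_ext_add:
  assumes "finite {z. p z \<noteq> 0}" "finite {z. q z \<noteq> 0}"
  shows "lin_ext f (\<lambda>z. p z + q z) = lin_ext f p + lin_ext f q"
proof -
  let ?F = "{z. p z \<noteq> 0} \<union> {z. q z \<noteq> 0}"
  have "finite ?F" using assms by simp
  then show ?thesis
    by (subst (1 2 3) lin_ext_eq_sum[of ?F]) (auto simp: scale_left_distrib sum.distrib)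
qed

lemma lin_ext_diff:
  assumes "finite {z. p z \<noteq> 0}" "finite {z. q z \<noteq> 0}"
  shows "lin_ext f (\<lambda>z. p z - q z) = lin_ext f p - lin_ext f q"
proof -
  let ?F = "{z. p z \<noteq> 0} \<union> {z. q z \<noteq> 0}"
  have "finite ?F" using assms by simp
  then show ?thesis
    by (subst (1 2 3) lin_ext_eq_sum[of ?F]) (auto simp: scale_left_diff_distrib sum_subtractf)
qed

lemma lin_ext_mult:
  assumes "finite {z. p z \<noteq> 0}"
  shows "lin_ext f (\<lambda>z. c * p z) = c *s lin_ext f p"
  using assms by (subst (1 2) lin_ext_eq_sum[of "{z. p z \<noteq> 0}"]) (auto simp: scale_sum_right)

lemma lin_ext_gen [simp]: "lin_ext f (gen x) = f x"
  by (subst lin_ext_eq_sum[of "{x}"]) (auto simp: gen_def)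

lemma lin_ext_fsum: "lin_ext f (fsum xs) = (\<Sum>x\<leftarrow>xs. f x)"
proof (induction xs)
  case Nil
  show ?case by (simp add: lin_ext_def fsum_def)
next
  case (Cons x xs)
  have "fsum (x # xs) = (\<lambda>z. gen x z + fsum xs z :: 'a)"
    by (auto simp: fsum_def gen_def)
  then show ?case
    by (simp add: lin_ext_add[OF finite_support_gen finite_support_fsum] Cons)
qed

lemma lin_ext_relator_add: "lin_ext f (relator_add x y w) = f x - f y - f w"
  by (subst lin_ext_diff, (rule finite_support_intros)+)+ simp

lemma lin_ext_relator_scale: "lin_ext f (relator_scale x c y) = f x - c *s f y"
  by (subst lin_ext_diff, (rule finite_support_intros)+) (simp add: lin_ext_mult finite_support_gen)

lemma lin_ext_tnull2_mem:
  assumes N: "subspace N"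
    and "\<And>a a' b. f (a + a', b) - f (a, b) - f (a', b) \<in> N"
    and "\<And>a b b'. f (a, b + b') - f (a, b) - f (a, b') \<in> N"
    and "\<And>c a b. f (sA c a, b) - c *s f (a, b) \<in> N"
    and "\<And>c a b. f (a, sB c b) - c *s f (a, b) \<in> N"
  shows "p \<in> tnull2 sA sB \<Longrightarrow> lin_ext f p \<in> N"
proof (induction rule: tnull2.induct)
  case zero2
  show ?case by (simp add: lin_ext_def subspace_0[OF N])
next
  case (add2 p q)
  then show ?case by (simp add: lin_ext_add finite_support_tnull2 subspace_add[OF N])
next
  case (smul2 p c)
  then show ?case by (simp add: lin_ext_mult finite_support_tnull2 subspace_scale[OF N])
qed (simp_all only: lin_ext_relator_add lin_ext_relator_scale assms)

lemma lin_ext_tnull3_mem: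
  assumes N: "subspace N"
    and "\<And>a a' b d. f (a + a', b, d) - f (a, b, d) - f (a', b, d) \<in> N"
    and "\<And>a b b' d. f (a, b + b', d) - f (a, b, d) - f (a, b', d) \<in> N"
    and "\<And>a b d d'. f (a, b, d + d') - f (a, b, d) - f (a, b, d') \<in> N"
    and "\<And>c a b d. f (sA c a, b, d) - c *s f (a, b, d) \<in> N"
    and "\<And>c a b d. f (a, sB c b, d) - c *s f (a, b, d) \<in> N"
    and "\<And>c a b d. f (a, b, sC c d) - c *s f (a, b, d) \<in> N"
  shows "p \<in> tnull3 sA sB sC \<Longrightarrow> lin_ext f p \<in> N"
proof (induction rule: tnull3.induct)
  case zero3
  show ?case by (simp add: lin_ext_def subspace_0[OF N])
next
  case (add3 p q)
  then show ?case by (simp add: lin_ext_add finite_support_tnull3 subspace_add[OF N])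
next
  case (smul3 p c)
  then show ?case by (simp add: lin_ext_mult finite_support_tnull3 subspace_scale[OF N])
qed (simp_all only: lin_ext_relator_add lin_ext_relator_scale assms)

lemma tens2_eq_sum_list_diff_mem:
  assumes "tens2_eq sA sB xs ys" and "subspace N"
    and "\<And>a a' b. f (a + a', b) - f (a, b) - f (a', b) \<in> N"
    and "\<And>a b b'. f (a, b + b') - f (a, b) - f (a, b') \<in> N"
    and "\<And>c a b. f (sA c a, b) - c *s f (a, b) \<in> N"
    and "\<And>c a b. f (a, sB c b) - c *s f (a, b) \<in> N"
  shows "(\<Sum>x\<leftarrow>xs. f x) - (\<Sum>y\<leftarrow>ys. f y) \<in> N"
proof -
  have "lin_ext f (\<lambda>z. fsum xs z - fsum ys z) \<in> N"
    using lin_ext_tnull2_mem[OF assms(2-)] assms(1) unfolding tens2_eq_def .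
  then show ?thesis by (simp add: lin_ext_diff finite_support_fsum lin_ext_fsum)
qed

lemma tens3_eq_sum_list_diff_mem:
  assumes "tens3_eq sA sB sC xs ys" and "subspace N"
    and "\<And>a a' b d. f (a + a', b, d) - f (a, b, d) - f (a', b, d) \<in> N"
    and "\<And>a b b' d. f (a, b + b', d) - f (a, b, d) - f (a, b', d) \<in> N"
    and "\<And>a b d d'. f (a, b, d + d') - f (a, b, d) - f (a, b, d') \<in> N"
    and "\<And>c a b d. f (sA c a, b, d) - c *s f (a, b, d) \<in> N"
    and "\<And>c a b d. f (a, sB c b, d) - c *s f (a, b, d) \<in> N"
    and "\<And>c a b d. f (a, b, sC c d) - c *s f (a, b, d) \<in> N"
  shows "(\<Sum>x\<leftarrow>xs. f x) - (\<Sum>y\<leftarrow>ys. f y) \<in> N"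
proof -
  have "lin_ext f (\<lambda>z. fsum xs z - fsum ys z) \<in> N"
    using lin_ext_tnull3_mem[OF assms(2-)] assms(1) unfolding tens3_eq_def .
  then show ?thesis by (simp add: lin_ext_diff finite_support_fsum lin_ext_fsum)
qed

lemma tens3_eq_sum_list_eq:
  assumes "tens3_eq sA sB sC xs ys"
    and "\<And>a a' b d. f (a + a', b, d) = f (a, b, d) + f (a', b, d)"
    and "\<And>a b b' d. f (a, b + b', d) = f (a, b, d) + f (a, b', d)"
    and "\<And>a b d d'. f (a, b, d + d') = f (a, b, d) + f (a, b, d')"
    and "\<And>c a b d. f (sA c a, b, d) = c *s f (a, b, d)"
    and "\<And>c a b d. f (a, sB c b, d) = c *s f (a, b, d)"
    and "\<And>c a b d. f (a, b, sC c d) = c *s f (a, b, d)"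
  shows "(\<Sum>x\<leftarrow>xs. f x) = (\<Sum>y\<leftarrow>ys. f y)"
  using tens3_eq_sum_list_diff_mem[OF assms(1) subspace_single_0] by (simp add: assms)

end

section \<open>Transport of tensor identities along maps\<close>

lemma module_pointwise_mult: "module (\<lambda>(c::'k::comm_ring_1) (q::'x \<Rightarrow> 'k) z. c * q z)"
  by unfold_locales (auto simp: algebra_simps)

lemma subspace_tnull2: "module.subspace (\<lambda>c q z. c * q z) (tnull2 sA sB)"
  using tnull2.zero2 tnull2.add2 tnull2.smul2
  unfolding module.subspace_def[OF module_pointwise_mult] zero_fun_def plus_fun_def by blast

lemma subspace_tnull3: "module.subspace (\<lambda>c q z. c * q z) (tnull3 sA sB sC)"
  using tnull3.zero3 tnull3.add3 tnull3.smul3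
  unfolding module.subspace_def[OF module_pointwise_mult] zero_fun_def plus_fun_def by blast

lemma sum_list_map_gen: "(\<Sum>x\<leftarrow>xs. gen (\<phi> x)) = (fsum (map \<phi> xs) :: _ \<Rightarrow> 'k::comm_ring_1)"
  by (induction xs) (auto simp: fsum_def gen_def)

lemma tens2_eq_map:
  fixes sA :: "'k::comm_ring_1 \<Rightarrow> 'a::ab_group_add \<Rightarrow> 'a"
  assumes "tens2_eq sA sB xs ys"
    and "\<And>a a' b. relator_add (\<phi> (a + a', b)) (\<phi> (a, b)) (\<phi> (a', b)) \<in> tnull2 sA' sB'"
    and "\<And>a b b'. relator_add (\<phi> (a, b + b')) (\<phi> (a, b)) (\<phi> (a, b')) \<in> tnull2 sA' sB'"
    and "\<And>c a b. relator_scale (\<phi> (sA c a, b)) c (\<phi> (a, b)) \<in> tnull2 sA' sB'"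
    and "\<And>c a b. relator_scale (\<phi> (a, sB c b)) c (\<phi> (a, b)) \<in> tnull2 sA' sB'"
  shows "tens2_eq sA' sB' (map \<phi> xs) (map \<phi> ys)"
proof -
  interpret F: module "\<lambda>(c::'k) q z. c * q z" by (rule module_pointwise_mult)
  have "(\<Sum>x\<leftarrow>xs. gen (\<phi> x)) - (\<Sum>y\<leftarrow>ys. gen (\<phi> y)) \<in> tnull2 sA' sB'"
    by (rule F.tens2_eq_sum_list_diff_mem[OF assms(1) subspace_tnull2])
       (simp_all only: fun_diff_def assms(2-))
  then show ?thesis unfolding tens2_eq_def sum_list_map_gen by (simp add: fun_diff_def)
qed

lemma tens3_eq_map:
  fixes sA :: "'k::comm_ring_1 \<Rightarrow> 'a::ab_group_add \<Rightarrow> 'a"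
  assumes "tens3_eq sA sB sC xs ys"
    and "\<And>a a' b d. relator_add (\<phi> (a + a', b, d)) (\<phi> (a, b, d)) (\<phi> (a', b, d))
      \<in> tnull3 sA' sB' sC'"
    and "\<And>a b b' d. relator_add (\<phi> (a, b + b', d)) (\<phi> (a, b, d)) (\<phi> (a, b', d))
      \<in> tnull3 sA' sB' sC'"
    and "\<And>a b d d'. relator_add (\<phi> (a, b, d + d')) (\<phi> (a, b, d)) (\<phi> (a, b, d'))
      \<in> tnull3 sA' sB' sC'"
    and "\<And>c a b d. relator_scale (\<phi> (sA c a, b, d)) c (\<phi> (a, b, d))
      \<in> tnull3 sA' sB' sC'"
    and "\<And>c a b d. relator_scale (\<phi> (a, sB c b, d)) c (\<phi> (a, b, d))
      \<in> tnull3 sA' sB' sC'"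
    and "\<And>c a b d. relator_scale (\<phi> (a, b, sC c d)) c (\<phi> (a, b, d))
      \<in> tnull3 sA' sB' sC'"
  shows "tens3_eq sA' sB' sC' (map \<phi> xs) (map \<phi> ys)"
proof -
  interpret F: module "\<lambda>(c::'k) q z. c * q z" by (rule module_pointwise_mult)
  have "(\<Sum>x\<leftarrow>xs. gen (\<phi> x)) - (\<Sum>y\<leftarrow>ys. gen (\<phi> y)) \<in> tnull3 sA' sB' sC'"
    by (rule F.tens3_eq_sum_list_diff_mem[OF assms(1) subspace_tnull3])
       (simp_all only: fun_diff_def assms(2-))
  then show ?thesis unfolding tens3_eq_def sum_list_map_gen by (simp add: fun_diff_def)
qed

lemma tens3_eq_map_tens2:
  fixes sA :: "'k::comm_ring_1 \<Rightarrow> 'a::ab_group_add \<Rightarrow> 'a"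
  assumes "tens3_eq sA sB sC xs ys"
    and "\<And>a a' b d. relator_add (\<phi> (a + a', b, d)) (\<phi> (a, b, d)) (\<phi> (a', b, d)) \<in> tnull2 sA' sB'"
    and "\<And>a b b' d. relator_add (\<phi> (a, b + b', d)) (\<phi> (a, b, d)) (\<phi> (a, b', d)) \<in> tnull2 sA' sB'"
    and "\<And>a b d d'. relator_add (\<phi> (a, b, d + d')) (\<phi> (a, b, d)) (\<phi> (a, b, d')) \<in> tnull2 sA' sB'"
    and "\<And>c a b d. relator_scale (\<phi> (sA c a, b, d)) c (\<phi> (a, b, d)) \<in> tnull2 sA' sB'"
    and "\<And>c a b d. relator_scale (\<phi> (a, sB c b, d)) c (\<phi> (a, b, d)) \<in> tnull2 sA' sB'"
    and "\<And>c a b d. relator_scale (\<phi> (a, b, sC c d)) c (\<phi> (a, b, d)) \<in> tnull2 sA' sB'"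
  shows "tens2_eq sA' sB' (map \<phi> xs) (map \<phi> ys)"
proof -
  interpret F: module "\<lambda>(c::'k) q z. c * q z" by (rule module_pointwise_mult)
  have "(\<Sum>x\<leftarrow>xs. gen (\<phi> x)) - (\<Sum>y\<leftarrow>ys. gen (\<phi> y)) \<in> tnull2 sA' sB'"
    by (rule F.tens3_eq_sum_list_diff_mem[OF assms(1) subspace_tnull2])
       (simp_all only: fun_diff_def assms(2-))
  then show ?thesis unfolding tens2_eq_def sum_list_map_gen by (simp add: fun_diff_def)
qed

lemma fsum_Nil: "fsum [] = (\<lambda>z. 0)"
  by (simp add: fsum_def)

lemma fsum_append: "fsum (xs @ ys) = (\<lambda>z. fsum xs z + fsum ys z)"
  by (simp add: fsum_def)

lemma fsum_singleton: "fsum [x] = gen x"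
  by (auto simp: fsum_def gen_def)

lemma fsum_doubleton: "fsum [x, y] = (\<lambda>z. gen x z + gen y z)"
  by (auto simp: fsum_def gen_def)

lemma fsum_eq_of_nat_count: "fsum xs z = (of_nat (count (mset xs) z) :: 'k::comm_ring_1)"
  by (induction xs) (auto simp: fsum_def)

lemma tens2_eq_refl: "tens2_eq sA sB xs xs"
  unfolding tens2_eq_def by (simp add: tnull2.zero2)

lemma tens2_eq_sym: "tens2_eq sA sB xs ys \<Longrightarrow> tens2_eq sA sB ys xs"
  unfolding tens2_eq_def using tnull2.smul2[of _ sA sB "- 1"] by fastforce

lemma tens2_eq_trans [trans]:
  "tens2_eq sA sB xs ys \<Longrightarrow> tens2_eq sA sB ys zs \<Longrightarrow> tens2_eq sA sB xs zs"
  unfolding tens2_eq_def using tnull2.add2 by fastforce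

lemma tens3_eq_trans [trans]:
  "tens3_eq sA sB sC xs ys \<Longrightarrow> tens3_eq sA sB sC ys zs \<Longrightarrow> tens3_eq sA sB sC xs zs"
  unfolding tens3_eq_def using tnull3.add3 by fastforce

lemma tens2_eq_perm: "mset xs = mset ys \<Longrightarrow> tens2_eq sA sB xs ys"
  unfolding tens2_eq_def by (simp add: fsum_eq_of_nat_count tnull2.zero2)

lemma tens3_eq_perm: "mset xs = mset ys \<Longrightarrow> tens3_eq sA sB sC xs ys"
  unfolding tens3_eq_def by (simp add: fsum_eq_of_nat_count tnull3.zero3)

lemma tens2_eq_append:
  "tens2_eq sA sB xs ys \<Longrightarrow> tens2_eq sA sB xs' ys' \<Longrightarrow> tens2_eq sA sB (xs @ xs') (ys @ ys')"
  unfolding tens2_eq_def fsum_append using tnull2.add2 by (fastforce simp: algebra_simps)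

lemma tens2_eq_concat_map:
  "(\<And>x. x \<in> set L \<Longrightarrow> tens2_eq sA sB (F x) (G x)) \<Longrightarrow>
    tens2_eq sA sB (concat (map F L)) (concat (map G L))"
  by (induction L) (simp_all add: tens2_eq_append tens2_eq_refl)

lemma tens2_eq_add_left: "tens2_eq sA sB [(a + a', b)] [(a, b), (a', b)]"
  unfolding tens2_eq_def fsum_singleton fsum_doubleton
  by (simp add: diff_diff_eq[symmetric] tnull2.addA2)

lemma tens2_eq_add_right: "tens2_eq sA sB [(a, b + b')] [(a, b), (a, b')]"
  unfolding tens2_eq_def fsum_singleton fsum_doubleton
  by (simp add: diff_diff_eq[symmetric] tnull2.addB2)

lemma tens2_eq_scale: "tens2_eq sA sB [(a, sB c b)] [(sA c a, b)]"
proof -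
  have "(\<lambda>z. (gen (a, sB c b) z - c * gen (a, b) z) + - 1 * (gen (sA c a, b) z - c * gen (a, b) z))
      \<in> tnull2 sA sB"
    by (intro tnull2.add2 tnull2.smul2 tnull2.sclA2 tnull2.sclB2)
  then show ?thesis
    unfolding tens2_eq_def fsum_singleton by (simp add: algebra_simps)
qed

lemma tens2_eq_sum_list_left: "tens2_eq sA sB [(\<Sum>y\<leftarrow>ys. g y, b)] (map (\<lambda>y. (g y, b)) ys)"
proof (induction ys)
  case Nil
  have "(\<lambda>z. - 1 * (gen (0 + 0, b) z - gen (0, b) z - gen (0, b) z)) \<in> tnull2 sA sB"
    by (intro tnull2.smul2 tnull2.addA2)
  then show ?case unfolding tens2_eq_def by (simp add: fsum_singleton fsum_Nil)
next
  case (Cons y ys)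
  have "tens2_eq sA sB ([(g y, b)] @ [(\<Sum>y\<leftarrow>ys. g y, b)]) ([(g y, b)] @ map (\<lambda>y. (g y, b)) ys)"
    by (rule tens2_eq_append[OF tens2_eq_refl Cons])
  then show ?case
    using tens2_eq_trans[OF tens2_eq_add_left] by simp
qed

lemma tens2_eq_sum_list_right: "tens2_eq sA sB [(a, \<Sum>y\<leftarrow>ys. g y)] (map (\<lambda>y. (a, g y)) ys)"
proof (induction ys)
  case Nil
  have "(\<lambda>z. - 1 * (gen (a, 0 + 0) z - gen (a, 0) z - gen (a, 0) z)) \<in> tnull2 sA sB"
    by (intro tnull2.smul2 tnull2.addB2)
  then show ?case unfolding tens2_eq_def by (simp add: fsum_singleton fsum_Nil)
next
  case (Cons y ys)
  have "tens2_eq sA sB ([(a, g y)] @ [(a, \<Sum>y\<leftarrow>ys. g y)]) ([(a, g y)] @ map (\<lambda>y. (a, g y)) ys)"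
    by (rule tens2_eq_append[OF tens2_eq_refl Cons])
  then show ?case
    using tens2_eq_trans[OF tens2_eq_add_right] by simp
qed

lemma mset_concat_map_swap:
  "mset (concat (map (\<lambda>x. map (h x) B) A)) = mset (concat (map (\<lambda>y. map (\<lambda>x. h x y) A) B))"
proof (induction A)
  case Nil
  then show ?case by (induction B) auto
next
  case (Cons a A)
  have "mset (concat (map (\<lambda>y. h a y # map (\<lambda>x. h x y) A) B))
      = mset (map (h a) B) + mset (concat (map (\<lambda>y. map (\<lambda>x. h x y) A) B))"
    by (induction B) auto
  with Cons show ?case by simp
qed

section \<open>Quasitriangular Hopf algebras\<close>

locale R_matrix =
  fixes sH :: "'k::comm_ring_1 \<Rightarrow> 'h::ring_1 \<Rightarrow> 'h"
    and D :: "'h \<Rightarrow> ('h \<times> 'h) list"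
    and R :: "('h \<times> 'h) list"
  assumes quasitriangular: "quasitriangular sH D R"
begin

abbreviation "Delta_id_R \<equiv> [(a1, a2, r2). (r1, r2) \<leftarrow> R, (a1, a2) \<leftarrow> D r1]"
abbreviation "id_Delta_R \<equiv> [(r1, b1, b2). (r1, r2) \<leftarrow> R, (b1, b2) \<leftarrow> D r2]"
abbreviation "R13_R23 \<equiv> [(r1, r1', r2 * r2'). (r1, r2) \<leftarrow> R, (r1', r2') \<leftarrow> R]"
abbreviation "R13_R12 \<equiv> [(r1 * r1', r2', r2). (r1, r2) \<leftarrow> R, (r1', r2') \<leftarrow> R]"

lemma R_Delta_eq_Delta_op_R:
  "tens2_eq sH sH [(r1 * a, r2 * b). (r1, r2) \<leftarrow> R, (a, b) \<leftarrow> D x]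
                  [(b * r1, a * r2). (a, b) \<leftarrow> D x, (r1, r2) \<leftarrow> R]"
  using quasitriangular unfolding quasitriangular_def by blast

lemma Delta_id_R_eq_R13_R23: "tens3_eq sH sH sH Delta_id_R R13_R23"
  using quasitriangular unfolding quasitriangular_def by blast

lemma id_Delta_R_eq_R13_R12: "tens3_eq sH sH sH id_Delta_R R13_R12"
  using quasitriangular unfolding quasitriangular_def by blast

end

locale quasitriangular_hopf_algebra = R_matrix sH D R
  for sH :: "'k::comm_ring_1 \<Rightarrow> 'h::ring_1 \<Rightarrow> 'h" and D R +
  fixes eps :: "'h \<Rightarrow> 'k" and S :: "'h \<Rightarrow> 'h"
  assumes hopf_algebra: "hopf_algebra sH D eps S"
begin

lemma kalg_H: "kalg sH"
  using hopf_algebra unfolding hopf_algebra_def by blast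

sublocale H: module sH
  by (rule kalg_module[OF kalg_H])

lemma scale_mult_left_H: "sH c x * y = sH c (x * y)"
  and scale_mult_right_H: "x * sH c y = sH c (x * y)"
  using kalg_mult_scale_left[OF kalg_H] kalg_mult_scale_right[OF kalg_H] by simp_all

lemma eps_add: "eps (x + y) = eps x + eps y"
  and eps_scale: "eps (sH c x) = c * eps x"
  and eps_mult: "eps (x * y) = eps x * eps y"
  and counit_left: "(\<Sum>(a, b)\<leftarrow>D x. sH (eps a) b) = x"
  and S_add: "S (x + y) = S x + S y"
  and S_scale: "S (sH c x) = sH c (S x)"
  and antipode_left: "(\<Sum>(a, b)\<leftarrow>D x. S a * b) = sH (eps x) 1"
  using hopf_algebra unfolding hopf_algebra_def by blast+

lemma additive_eps: "additive eps"
  by unfold_locales (rule eps_add)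

lemma additive_S: "additive S"
  by unfold_locales (rule S_add)

lemma counit_mult_counit: "(\<Sum>(a, b)\<leftarrow>D x. eps a * eps b) = eps x"
proof -
  have "eps x = eps (\<Sum>(a, b)\<leftarrow>D x. sH (eps a) b)"
    by (simp add: counit_left)
  also have "\<dots> = (\<Sum>(a, b)\<leftarrow>D x. eps a * eps b)"
    by (simp add: additive.sum_list_map[OF additive_eps] eps_scale split_def)
  finally show ?thesis ..
qed

definition eps_id_R :: 'h where
  "eps_id_R = (\<Sum>(r1, r2)\<leftarrow>R. sH (eps r1) r2)"

lemma eps_eps_id_R: "eps eps_id_R = (\<Sum>(r1, r2)\<leftarrow>R. eps r1 * eps r2)"
  by (simp add: eps_id_R_def additive.sum_list_map[OF additive_eps] eps_scale split_def)

lemma counit_counit_scale: "(\<Sum>(a, b)\<leftarrow>D x. sH (eps a) (sH (eps b) y)) = sH (eps x) y"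
proof -
  have "sH (eps x) y = sH (\<Sum>(a, b)\<leftarrow>D x. eps a * eps b) y"
    by (simp only: counit_mult_counit)
  also have "\<dots> = (\<Sum>(a, b)\<leftarrow>D x. sH (eps a) (sH (eps b) y))"
    by (simp add: H.scale_sum_list_left split_def)
  finally show ?thesis ..
qed

lemma eps_id_R_idem: "eps_id_R * eps_id_R = eps_id_R"
proof -
  let ?f = "\<lambda>(x, y, z). sH (eps x) (sH (eps y) z)"
  have "(\<Sum>t\<leftarrow>Delta_id_R. ?f t) = (\<Sum>t\<leftarrow>R13_R23. ?f t)"
    by (rule H.tens3_eq_sum_list_eq[OF Delta_id_R_eq_R13_R23])
       (simp_all add: eps_add eps_scale H.scale_left_distrib H.scale_right_distrib ring_distribs mult_ac)
  moreover have "(\<Sum>t\<leftarrow>Delta_id_R. ?f t) = eps_id_R"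
    using counit_counit_scale by (simp add: eps_id_R_def sum_list_map_concat split_def comp_def)
  moreover have "(\<Sum>t\<leftarrow>R13_R23. ?f t) = eps_id_R * eps_id_R"
    by (simp add: eps_id_R_def sum_list_map_concat sum_list_mult_sum_list split_def comp_def
          scale_mult_left_H scale_mult_right_H mult.commute)
  ultimately show ?thesis by simp
qed

lemma counit_left_scale: "(\<Sum>(a, b)\<leftarrow>D x. sH (c * eps a) b) = sH c x"
proof -
  have "sH c x = sH c (\<Sum>(a, b)\<leftarrow>D x. sH (eps a) b)"
    by (simp only: counit_left)
  also have "\<dots> = (\<Sum>(a, b)\<leftarrow>D x. sH (c * eps a) b)"
    by (simp add: H.scale_sum_list_right split_def)
  finally show ?thesis ..
qed

lemma antipode_left_scale: "(\<Sum>(a, b)\<leftarrow>D x. sH c (S a * b)) = sH (c * eps x) 1"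
proof -
  have "sH (c * eps x) 1 = sH c (\<Sum>(a, b)\<leftarrow>D x. S a * b)"
    by (simp add: antipode_left)
  also have "\<dots> = (\<Sum>(a, b)\<leftarrow>D x. sH c (S a * b))"
    by (simp add: H.scale_sum_list_right split_def)
  finally show ?thesis ..
qed

lemma eps_id_R_scale: "sH (eps eps_id_R) eps_id_R = eps_id_R"
proof -
  let ?f = "\<lambda>(x, y, z). sH (eps x) (sH (eps y) z)"
  have "(\<Sum>t\<leftarrow>id_Delta_R. ?f t) = (\<Sum>t\<leftarrow>R13_R12. ?f t)"
    by (rule H.tens3_eq_sum_list_eq[OF id_Delta_R_eq_R13_R12])
       (simp_all add: eps_add eps_scale H.scale_left_distrib H.scale_right_distrib ring_distribs mult_ac)
  moreover have "(\<Sum>t\<leftarrow>id_Delta_R. ?f t) = eps_id_R"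
    using counit_left_scale by (simp add: eps_id_R_def sum_list_map_concat split_def comp_def)
  moreover have "(\<Sum>t\<leftarrow>R13_R12. ?f t) = sH (eps eps_id_R) eps_id_R"
    unfolding eps_eps_id_R by (simp add: eps_id_R_def sum_list_map_concat split_def comp_def eps_mult
          H.scale_sum_list_left H.scale_sum_list_right mult_ac flip: sum_list_const_mult)
  ultimately show ?thesis by simp
qed

lemma eps_id_R_antipode: "S eps_id_R * eps_id_R = sH (eps eps_id_R) 1"
proof -
  let ?f = "\<lambda>(x, y, z). sH (eps x) (S y * z)"
  have "(\<Sum>t\<leftarrow>id_Delta_R. ?f t) = (\<Sum>t\<leftarrow>R13_R12. ?f t)"
    by (rule H.tens3_eq_sum_list_eq[OF id_Delta_R_eq_R13_R12])
       (simp_all add: eps_add eps_scale S_add S_scale H.scale_left_distrib H.scale_right_distrib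
          ring_distribs scale_mult_left_H scale_mult_right_H mult_ac)
  moreover have "(\<Sum>t\<leftarrow>id_Delta_R. ?f t) = sH (eps eps_id_R) 1"
    using antipode_left_scale
    by (simp add: eps_eps_id_R sum_list_map_concat split_def comp_def H.scale_sum_list_left)
  moreover have "(\<Sum>t\<leftarrow>R13_R12. ?f t) = S eps_id_R * eps_id_R"
  proof -
    have "(\<Sum>t\<leftarrow>R13_R12. ?f t)
        = (\<Sum>x\<leftarrow>R. \<Sum>y\<leftarrow>R. sH (eps (fst x) * eps (fst y)) (S (snd y) * snd x))"
      by (simp add: sum_list_map_concat split_def comp_def eps_mult)
    also have "\<dots> = (\<Sum>y\<leftarrow>R. \<Sum>x\<leftarrow>R. sH (eps (fst x) * eps (fst y)) (S (snd y) * snd x))"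
      by (rule sum_list_swap)
    also have "\<dots> = S eps_id_R * eps_id_R"
      by (simp add: eps_id_R_def additive.sum_list_map[OF additive_S] sum_list_mult_sum_list
          split_def S_scale scale_mult_left_H scale_mult_right_H mult_ac)
    finally show ?thesis .
  qed
  ultimately show ?thesis by simp
qed

lemma eps_id_R_eq_scalar: "eps_id_R = sH (eps eps_id_R) 1"
proof -
  let ?v = eps_id_R and ?e = "eps eps_id_R"
  have "?v = sH ?e 1 * ?v"
    using eps_id_R_scale by (simp add: scale_mult_left_H)
  also have "\<dots> = S ?v * (?v * ?v)"
    by (simp add: mult.assoc flip: eps_id_R_antipode)
  also have "\<dots> = sH ?e 1"
    by (simp add: eps_id_R_idem eps_id_R_antipode)
  finally show ?thesis .
qed

end

section \<open>The coaction of a quasi-commutative module algebra\<close>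

locale quasi_commutative_module_algebra = R_matrix sH D R
  for sH :: "'k::comm_ring_1 \<Rightarrow> 'h::ring_1 \<Rightarrow> 'h" and D R +
  fixes sL :: "'k \<Rightarrow> 'l::ring_1 \<Rightarrow> 'l" and eps :: "'h \<Rightarrow> 'k" and act :: "'h \<Rightarrow> 'l \<Rightarrow> 'l"
  assumes module_algebra: "module_algebra sH sL D eps act"
    and quasi_commutative: "(\<Sum>(r1, r2)\<leftarrow>R. act r2 l2 * act r1 l1) = l1 * l2"
begin

lemma kalg_L: "kalg sL"
  and act_add_left: "act (x + y) l = act x l + act y l"
  and act_scale_left: "act (sH c x) l = sL c (act x l)"
  and act_add_right: "act x (l + l') = act x l + act x l'"
  and act_scale_right: "act x (sL c l) = sL c (act x l)"
  and act_mult: "act (x * y) l = act x (act y l)"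
  and act_one: "act 1 l = l"
  and act_mult_right: "act x (l * l') = (\<Sum>(a, b)\<leftarrow>D x. act a l * act b l')"
  and act_unit: "act x 1 = sL (eps x) 1"
  using module_algebra unfolding module_algebra_def by blast+

lemma additive_act: "additive (\<lambda>x. act x l)"
  by unfold_locales (rule act_add_left)

lemma scale_mult_left_L: "sL c l * l' = sL c (l * l')"
  and scale_mult_right_L: "l * sL c l' = sL c (l * l')"
  using kalg_mult_scale_left[OF kalg_L] kalg_mult_scale_right[OF kalg_L] by simp_all

definition coaction :: "'l \<Rightarrow> ('h \<times> 'l) list" where
  "coaction l = map (\<lambda>(r1, r2). (r2, act r1 l)) R"

lemma coaction_add: "tens2_eq sH sL (coaction (l + l')) (coaction l @ coaction l')"
proof -
  have "coaction (l + l') = concat (map (\<lambda>(r1, r2). [(r2, act r1 l + act r1 l')]) R)"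
    by (simp add: coaction_def act_add_right split_def)
  also have "tens2_eq sH sL \<dots> (concat (map (\<lambda>(r1, r2). [(r2, act r1 l), (r2, act r1 l')]) R))"
    by (rule tens2_eq_concat_map) (auto simp: tens2_eq_add_right)
  also have "tens2_eq sH sL \<dots> (coaction l @ coaction l')"
    unfolding coaction_def by (rule tens2_eq_perm) (induction R, auto)
  finally show ?thesis .
qed

lemma coaction_scale: "coaction (sL c l) = [(a, sL c m). (a, m) \<leftarrow> coaction l]"
  by (simp add: coaction_def act_scale_right split_def)

lemma coaction_counit: "(\<Sum>(a, m)\<leftarrow>coaction l. sL (eps a) m) = l"
proof -
  have "(\<Sum>(a, m)\<leftarrow>coaction l. sL (eps a) m) = (\<Sum>(r1, r2)\<leftarrow>R. act r2 1 * act r1 l)"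
    by (simp add: coaction_def split_def comp_def act_unit scale_mult_left_L)
  then show ?thesis by (simp add: quasi_commutative)
qed

lemma mult_eq_coaction: "l1 * l2 = (\<Sum>(c, m)\<leftarrow>coaction l1. act c l2 * m)"
  using quasi_commutative[of l2 l1] by (simp add: coaction_def split_def comp_def)

lemma coaction_coassoc:
  "tens3_eq sH sH sL [(a1, a2, m). (a, m) \<leftarrow> coaction l, (a1, a2) \<leftarrow> D a]
                     [(a, b, m'). (a, m) \<leftarrow> coaction l, (b, m') \<leftarrow> coaction m]"
proof -
  let ?\<phi> = "\<lambda>(x, y, z). (y, z, act x l)"
  let ?h = "\<lambda>r s. (snd s, snd r, act (fst r * fst s) l)"
  have "[(a1, a2, m). (a, m) \<leftarrow> coaction l, (a1, a2) \<leftarrow> D a] = map ?\<phi> id_Delta_R"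
    by (simp add: coaction_def map_concat split_def comp_def)
  also have "tens3_eq sH sH sL \<dots> (map ?\<phi> R13_R12)"
    by (rule tens3_eq_map[OF id_Delta_R_eq_R13_R12])
       (simp_all add: act_add_left act_scale_left tnull3.intros)
  also have "map ?\<phi> R13_R12 = concat (map (\<lambda>r. map (?h r) R) R)"
    by (simp add: map_concat split_def comp_def)
  also have "tens3_eq sH sH sL \<dots> (concat (map (\<lambda>s. map (\<lambda>r. ?h r s) R) R))"
    by (rule tens3_eq_perm[OF mset_concat_map_swap])
  also have "concat (map (\<lambda>s. map (\<lambda>r. ?h r s) R) R)
      = [(a, b, m'). (a, m) \<leftarrow> coaction l, (b, m') \<leftarrow> coaction m]"
    by (simp add: coaction_def map_concat split_def comp_def act_mult)
  finally show ?thesis .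
qed

lemma coaction_mult:
  "tens2_eq sH sL (coaction (l * l'))
     [(a * a', m * m'). (a, m) \<leftarrow> coaction l, (a', m') \<leftarrow> coaction l']"
proof -
  let ?\<phi> = "\<lambda>(x, y, z). (z, act x l * act y l')"
  have "coaction (l * l')
      = concat (map (\<lambda>(r1, r2). [(r2, \<Sum>(a1, a2)\<leftarrow>D r1. act a1 l * act a2 l')]) R)"
    by (simp add: coaction_def act_mult_right split_def)
  also have "tens2_eq sH sL \<dots>
      (concat (map (\<lambda>(r1, r2). map (\<lambda>(a1, a2). (r2, act a1 l * act a2 l')) (D r1)) R))"
    by (rule tens2_eq_concat_map) (auto simp: split_def tens2_eq_sum_list_right)
  also have "\<dots> = map ?\<phi> Delta_id_R"
    by (simp add: map_concat split_def comp_def)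
  also have "tens2_eq sH sL \<dots> (map ?\<phi> R13_R23)"
    by (rule tens3_eq_map_tens2[OF Delta_id_R_eq_R13_R23])
       (simp_all add: act_add_left act_scale_left ring_distribs scale_mult_left_L scale_mult_right_L
          tnull2.intros)
  also have "map ?\<phi> R13_R23
      = [(a * a', m * m'). (a, m) \<leftarrow> coaction l, (a', m') \<leftarrow> coaction l']"
    by (simp add: coaction_def map_concat split_def comp_def)
  finally show ?thesis .
qed

lemma coaction_act:
  "tens2_eq sH sL [(c * a2, m). (a1, a2) \<leftarrow> D x, (c, m) \<leftarrow> coaction (act a1 l)]
                  [(a1 * c, act a2 m). (a1, a2) \<leftarrow> D x, (c, m) \<leftarrow> coaction l]"
proof -
  let ?\<phi> = "\<lambda>(p, q). (q, act p l)"
  let ?h = "\<lambda>r ab. (snd r * snd ab, act (fst r * fst ab) l)"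
  have "[(c * a2, m). (a1, a2) \<leftarrow> D x, (c, m) \<leftarrow> coaction (act a1 l)]
      = concat (map (\<lambda>ab. map (\<lambda>r. ?h r ab) R) (D x))"
    by (simp add: coaction_def map_concat split_def comp_def act_mult)
  also have "tens2_eq sH sL \<dots> (concat (map (\<lambda>r. map (?h r) (D x)) R))"
    by (rule tens2_eq_perm) (rule mset_concat_map_swap[symmetric])
  also have "\<dots> = map ?\<phi> [(r1 * a, r2 * b). (r1, r2) \<leftarrow> R, (a, b) \<leftarrow> D x]"
    by (simp add: map_concat split_def comp_def)
  also have "tens2_eq sH sL \<dots> (map ?\<phi> [(b * r1, a * r2). (a, b) \<leftarrow> D x, (r1, r2) \<leftarrow> R])"
    by (rule tens2_eq_map[OF R_Delta_eq_Delta_op_R])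
       (simp_all add: act_add_left act_scale_left tnull2.intros)
  also have "\<dots> = [(a1 * c, act a2 m). (a1, a2) \<leftarrow> D x, (c, m) \<leftarrow> coaction l]"
    by (simp add: coaction_def map_concat split_def comp_def act_mult)
  finally show ?thesis .
qed

lemma coaction_one:
  assumes "hopf_algebra sH D eps S"
  shows "tens2_eq sH sL (coaction 1) [(1, 1)]"
proof -
  interpret quasitriangular_hopf_algebra sH D R eps S
    by unfold_locales (rule assms)
  have act_eps_id_R: "act eps_id_R l = l" for l
  proof -
    have "act eps_id_R l = (\<Sum>(r1, r2)\<leftarrow>R. act r2 l * act r1 1)"
      by (simp add: eps_id_R_def additive.sum_list_map[OF additive_act] split_def act_scale_left
          act_unit scale_mult_right_L)
    then show ?thesis by (simp add: quasi_commutative)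
  qed
  have "sL (eps eps_id_R) 1 = act (sH (eps eps_id_R) 1) 1"
    by (simp add: act_scale_left act_one)
  then have scalar_one: "sL (eps eps_id_R) 1 = 1"
    by (simp only: eps_id_R_eq_scalar[symmetric] act_eps_id_R)
  have "coaction 1 = concat (map (\<lambda>(r1, r2). [(r2, sL (eps r1) 1)]) R)"
    by (simp add: coaction_def act_unit split_def)
  also have "tens2_eq sH sL \<dots> (concat (map (\<lambda>(r1, r2). [(sH (eps r1) r2, 1)]) R))"
    by (rule tens2_eq_concat_map) (auto simp: tens2_eq_scale)
  also have "tens2_eq sH sL \<dots> [(eps_id_R, 1)]"
    unfolding eps_id_R_def by (simp add: split_def tens2_eq_sym[OF tens2_eq_sum_list_left])
  also have "tens2_eq sH sL \<dots> [(1, sL (eps eps_id_R) 1)]"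
    by (subst eps_id_R_eq_scalar) (rule tens2_eq_sym[OF tens2_eq_scale])
  finally show ?thesis by (simp add: scalar_one)
qed

end

theorem proposition3p6:
  fixes sH :: "'k::comm_ring_1 \<Rightarrow> 'h::ring_1 \<Rightarrow> 'h"
    and sL :: "'k \<Rightarrow> 'l::ring_1 \<Rightarrow> 'l"
    and D :: "'h \<Rightarrow> ('h \<times> 'h) list"
    and eps :: "'h \<Rightarrow> 'k"
    and S :: "'h \<Rightarrow> 'h"
    and R :: "('h \<times> 'h) list"
    and act :: "'h \<Rightarrow> 'l \<Rightarrow> 'l"
  assumes "hopf_algebra sH D eps S"
    and "quasitriangular sH D R"
    and "module_algebra sH sL D eps act"
    and "\<forall>l1 l2. sum_list (map (\<lambda>(r1, r2). act r2 l2 * act r1 l1) R) = l1 * l2"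
  shows "base_algebra sH sL D eps act (\<lambda>l. map (\<lambda>(r1, r2). (r2, act r1 l)) R)"
proof -
  interpret quasi_commutative_module_algebra sH D R sL eps act
    using assms(2-4) by unfold_locales auto
  have coaction: "(\<lambda>l. map (\<lambda>(r1, r2). (r2, act r1 l)) R) = coaction"
    by (simp add: fun_eq_iff coaction_def)
  have "comodule_algebra sH sL D eps coaction"
    unfolding comodule_algebra_def
    using kalg_L coaction_add coaction_coassoc coaction_counit coaction_mult coaction_one[OF assms(1)]
    by (simp add: coaction_scale tens2_eq_refl)
  then show ?thesis
    unfolding base_algebra_def coaction
    using assms(3) coaction_act mult_eq_coaction by blast
qed

end
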